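(* Any non-abelian Lie superalgebra does not possess simultaneously a quadratic structure and an odd-quadratic structure.
   Context: All vector spaces are finite dimensional over an algebraically closed field $\mathbb{K}$ of characteristic zero. A Lie superalgebra is $\mathfrak{g}=\mathfrak{g}_{\bar{0}}\oplus\mathfrak{g}_{\bar{1}}$. A quadratic (resp. odd-quadratic) structure on $\mathfrak{g}$ is a non-degenerate, supersymmetric, invariant bilinear form on $\mathfrak{g}$ which is even, i.e. $B(\mathfrak{g}_{\bar{0}},\mathfrak{g}_{\bar{1}})=\{0\}$ (resp. odd, i.e. $B(\mathfrak{g}_{\bar{0}},\mathfrak{g}_{\bar{0}})=B(\mathfrak{g}_{\bar{1}},\mathfrak{g}_{\bar{1}})=\{0\}$). *)

theory Defs
  imports Main "HOL-Computational_Algebra.Polynomial"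
begin

text \<open>The ground field is algebraically closed (characteristic zero is imposed via
the type class field_char_0 on the scalar type).\<close>
definition alg_closed_field :: "'k::field itself \<Rightarrow> bool" where
  "alg_closed_field TYPE('k) \<longleftrightarrow>
     (\<forall>p :: 'k poly. 0 < degree p \<longrightarrow> (\<exists>x. poly p x = 0))"

definition fin_dim_vs :: "('k::field \<Rightarrow> 'v::ab_group_add \<Rightarrow> 'v) \<Rightarrow> bool" where
  "fin_dim_vs s \<longleftrightarrow> vector_space s \<and> (\<exists>S. finite S \<and> module.span s S = UNIV)"

text \<open>Z/2-grading: V False is the even part g_0, V True is the odd part g_1;
g = g_0 (+) g_1 as a direct sum of subspaces.\<close>
definition z2_graded :: "('k::field \<Rightarrow> 'v::ab_group_add \<Rightarrow> 'v) \<Rightarrow> (bool \<Rightarrow> 'v set) \<Rightarrow> bool" where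
  "z2_graded s V \<longleftrightarrow> module.subspace s (V False) \<and> module.subspace s (V True)
     \<and> (\<forall>v. \<exists>!ab. fst ab \<in> V False \<and> snd ab \<in> V True \<and> v = fst ab + snd ab)"

text \<open>Sign (-1)^(|x||y|) for parities p, q (True = odd).\<close>
definition psign :: "bool \<Rightarrow> bool \<Rightarrow> 'a::comm_ring_1" where
  "psign p q = (if p \<and> q then -1 else 1)"

definition bilinear_map :: "('k::field \<Rightarrow> 'v::ab_group_add \<Rightarrow> 'v) \<Rightarrow> ('k \<Rightarrow> 'w::ab_group_add \<Rightarrow> 'w)
    \<Rightarrow> ('v \<Rightarrow> 'v \<Rightarrow> 'w) \<Rightarrow> bool" where
  "bilinear_map s t f \<longleftrightarrow> (\<forall>x. Vector_Spaces.linear s t (f x)) \<and> (\<forall>y. Vector_Spaces.linear s t (\<lambda>x. f x y))"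

definition lie_superalgebra ::
  "('k::field \<Rightarrow> 'v::ab_group_add \<Rightarrow> 'v) \<Rightarrow> (bool \<Rightarrow> 'v set) \<Rightarrow> ('v \<Rightarrow> 'v \<Rightarrow> 'v) \<Rightarrow> bool" where
  "lie_superalgebra s V br \<longleftrightarrow>
     fin_dim_vs s \<and> z2_graded s V \<and> bilinear_map s s br
     \<and> (\<forall>p q x y. x \<in> V p \<longrightarrow> y \<in> V q \<longrightarrow> br x y \<in> V (p \<noteq> q))
     \<and> (\<forall>p q x y. x \<in> V p \<longrightarrow> y \<in> V q \<longrightarrow> br x y = - s (psign p q) (br y x))
     \<and> (\<forall>p q r x y z. x \<in> V p \<longrightarrow> y \<in> V q \<longrightarrow> z \<in> V r \<longrightarrow>
          s (psign p r) (br x (br y z)) + s (psign q p) (br y (br z x))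
            + s (psign r q) (br z (br x y)) = 0)"

definition abelian_bracket :: "('v \<Rightarrow> 'v \<Rightarrow> 'v::zero) \<Rightarrow> bool" where
  "abelian_bracket br \<longleftrightarrow> (\<forall>x y. br x y = 0)"

definition nd_ss_inv_form ::
  "('k::field \<Rightarrow> 'v::ab_group_add \<Rightarrow> 'v) \<Rightarrow> (bool \<Rightarrow> 'v set) \<Rightarrow> ('v \<Rightarrow> 'v \<Rightarrow> 'v)
     \<Rightarrow> ('v \<Rightarrow> 'v \<Rightarrow> 'k) \<Rightarrow> bool" where
  "nd_ss_inv_form s V br B \<longleftrightarrow>
     bilinear_map s (*) B
     \<and> (\<forall>x. (\<forall>y. B x y = 0) \<longrightarrow> x = 0)
     \<and> (\<forall>p q x y. x \<in> V p \<longrightarrow> y \<in> V q \<longrightarrow> B x y = psign p q * B y x)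
     \<and> (\<forall>x y z. B (br x y) z = B x (br y z))"

definition quadratic_structure ::
  "('k::field \<Rightarrow> 'v::ab_group_add \<Rightarrow> 'v) \<Rightarrow> (bool \<Rightarrow> 'v set) \<Rightarrow> ('v \<Rightarrow> 'v \<Rightarrow> 'v)
     \<Rightarrow> ('v \<Rightarrow> 'v \<Rightarrow> 'k) \<Rightarrow> bool" where
  "quadratic_structure s V br B \<longleftrightarrow> nd_ss_inv_form s V br B
     \<and> (\<forall>x y. x \<in> V False \<longrightarrow> y \<in> V True \<longrightarrow> B x y = 0)"

definition odd_quadratic_structure ::
  "('k::field \<Rightarrow> 'v::ab_group_add \<Rightarrow> 'v) \<Rightarrow> (bool \<Rightarrow> 'v set) \<Rightarrow> ('v \<Rightarrow> 'v \<Rightarrow> 'v)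
     \<Rightarrow> ('v \<Rightarrow> 'v \<Rightarrow> 'k) \<Rightarrow> bool" where
  "odd_quadratic_structure s V br B \<longleftrightarrow> nd_ss_inv_form s V br B
     \<and> (\<forall>x y. x \<in> V False \<longrightarrow> y \<in> V False \<longrightarrow> B x y = 0)
     \<and> (\<forall>x y. x \<in> V True \<longrightarrow> y \<in> V True \<longrightarrow> B x y = 0)"

end

theory Submission
  imports Defs
begin

text \<open>Let \<open>B\<close> be an even and \<open>B'\<close> an odd quadratic structure. Nondegeneracy of \<open>B\<close> yields a
linear map \<open>D\<close> with \<open>B' x z = B (D x) z\<close>; it is injective and odd, and invariance of both
forms gives \<open>D[x,y] = [Dx,y]\<close> and \<open>D[x,y] = (-1)^|x| [x,Dy]\<close>. Computing \<open>D\<^sup>2[x,y]\<close> in the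
two possible orders gives \<open>[Dx,Dy] = -[Dx,Dy]\<close>, hence \<open>D\<^sup>2[x,y] = 0\<close> and \<open>[x,y] = 0\<close>.
Only bilinearity of the bracket is used: neither the Jacobi identity nor algebraic
closedness of the field plays a role, and characteristic \<open>\<noteq> 2\<close> suffices.\<close>

lemma bilinear_map_module_hom:
  assumes "bilinear_map s t f"
  shows bilinear_map_module_hom_right: "module_hom s t (f x)"
    and bilinear_map_module_hom_left: "module_hom s t (\<lambda>x. f x y)"
  using assms by (simp_all add: bilinear_map_def linear_iff_module_hom)

lemma fin_dim_vs_obtain_basis:
  assumes "fin_dim_vs s"
  obtains Bs where "finite_dimensional_vector_space s Bs"
proof -
  obtain S where S: "vector_space s" "finite S" "module.span s S = UNIV"
    using assms unfolding fin_dim_vs_def by blast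
  interpret vector_space s by fact
  obtain Bs where Bs: "independent Bs" "UNIV \<subseteq> span Bs"
    using basis_exists[of UNIV] by blast
  have "finite Bs"
    using independent_span_bound[OF S(2) Bs(1)] S(3) by auto
  with Bs have "finite_dimensional_vector_space s Bs"
    by unfold_locales auto
  then show ?thesis by (rule that)
qed

context finite_dimensional_vector_space
begin

lemma Basis_coordinates_eq:
  assumes "(\<Sum>b\<in>Basis. c b *s b) = (\<Sum>b\<in>Basis. d b *s b)" and "b \<in> Basis"
  shows "c b = d b"
proof -
  have "(\<Sum>b\<in>Basis. (c b - d b) *s b) = 0"
    using assms(1) by (simp add: scale_left_diff_distrib sum_subtractf)
  then show ?thesis
    using independentD[OF independent_Basis finite_Basis order_refl] assms(2) by fastforce
qed

lemma nondegenerate_form_represents_functional: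
  assumes B: "bilinear_map scale (*) B"
    and nondeg: "\<And>x. (\<forall>y. B x y = 0) \<Longrightarrow> x = 0"
    and f: "module_hom scale (*) f"
  obtains u where "\<And>z. B u z = f z"
proof -
  interpret forms: module_pair scale "(*)" by unfold_locales (simp_all add: algebra_simps)
  note B_left = bilinear_map_module_hom_left[OF B] and B_right = bilinear_map_module_hom_right[OF B]
  have agree: "B u z = g z" if "\<And>b. b \<in> Basis \<Longrightarrow> B u b = g b" "module_hom scale (*) g" for u g z
    using forms.module_hom_eq_on_span[OF B_right that(2)] that(1) span_Basis by blast
  define \<Phi> where "\<Phi> v = (\<Sum>b\<in>Basis. B v b *s b)" for v
  have \<Phi>: "module_hom scale scale \<Phi>"
  proof -
    interpret endo: module_pair scale scale by unfold_locales
    show ?thesis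
      unfolding \<Phi>_def
      by (rule endo.module_hom_sum) (auto intro: endo.module_hom_compose_scale B_left module_axioms)
  qed
  have "inj \<Phi>"
  proof -
    have "v = 0" if "\<Phi> v = 0" for v
    proof -
      have "B v b = 0" if "b \<in> Basis" for b
        using Basis_coordinates_eq[of "\<lambda>b. B v b" "\<lambda>_. 0"] \<open>\<Phi> v = 0\<close> that
        by (simp add: \<Phi>_def)
      then show "v = 0"
        using agree[of v "\<lambda>_. 0"] nondeg forms.module_hom_zero by blast
    qed
    then show ?thesis
      using module_hom.inj_iff_eq_0[OF \<Phi>] by blast
  qed
  then have "surj \<Phi>"
    using linear_inj_imp_surj \<Phi> unfolding linear_iff_module_hom by blast
  then obtain u where u: "\<Phi> u = (\<Sum>b\<in>Basis. f b *s b)"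
    by (metis surjD)
  have "B u b = f b" if "b \<in> Basis" for b
    using Basis_coordinates_eq[OF _ that, of "\<lambda>b. B u b" f] u by (simp add: \<Phi>_def)
  then have "B u z = f z" for z
    by (rule agree[OF _ f])
  then show thesis
    by (rule that)
qed

end

locale z2_graded_vector_space = vector_space scale
  for scale :: "'k::field \<Rightarrow> 'v::ab_group_add \<Rightarrow> 'v" (infixr \<open>*s\<close> 75) +
  fixes V :: "bool \<Rightarrow> 'v set"
  assumes z2_graded: "z2_graded scale V"
begin

lemma homogeneous_decomposition:
  obtains a b where "a \<in> V p" "b \<in> V (\<not> p)" "v = a + b"
proof -
  obtain a b where "a \<in> V False" "b \<in> V True" "v = a + b"
    using z2_graded unfolding z2_graded_def by (metis fst_conv snd_conv)
  then show thesis
    using that by (cases p) (auto simp: add.commute)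
qed

lemma quadratic_structure_orthogonal:
  assumes "quadratic_structure scale V br B" "x \<in> V p" "y \<in> V q" "p \<noteq> q"
  shows "B x y = 0"
proof -
  have even: "\<And>x y. x \<in> V False \<Longrightarrow> y \<in> V True \<Longrightarrow> B x y = 0"
    and supersym: "B x y = psign p q * B y x"
    using assms unfolding quadratic_structure_def nd_ss_inv_form_def by blast+
  show ?thesis
  proof (cases p)
    case True
    with assms(3,4) supersym show ?thesis
      using even[of y x] assms(2) by simp
  next
    case False
    with assms(2-4) show ?thesis
      using even by simp
  qed
qed

lemma quadratic_structure_commute:
  assumes Q: "quadratic_structure scale V br B" and x: "x \<in> V p"
  shows "B w x = psign p p * B x w"
proof -
  have B: "bilinear_map scale (*) B"
    and supersym: "\<And>p q x y. x \<in> V p \<Longrightarrow> y \<in> V q \<Longrightarrow> B x y = psign p q * B y x"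
    using Q unfolding quadratic_structure_def nd_ss_inv_form_def by blast+
  obtain a b where ab: "a \<in> V p" "b \<in> V (\<not> p)" "w = a + b"
    by (rule homogeneous_decomposition)
  have "B w x = B a x + B b x"
    using ab by (simp add: module_hom.add[OF bilinear_map_module_hom_left[OF B]])
  also have "\<dots> = psign p p * B x a"
    using supersym[OF ab(1) x] quadratic_structure_orthogonal[OF Q ab(2) x] by simp
  also have "B x a = B x w"
    using ab quadratic_structure_orthogonal[OF Q x ab(2)]
    by (simp add: module_hom.add[OF bilinear_map_module_hom_right[OF B]])
  finally show ?thesis .
qed

lemma odd_quadratic_structure_same_parity:
  assumes "odd_quadratic_structure scale V br B" "x \<in> V p" "y \<in> V p"
  shows "B x y = 0"
  using assms unfolding odd_quadratic_structure_def by (cases p) simp_all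

lemma odd_quadratic_structure_symmetric:
  assumes O: "odd_quadratic_structure scale V br B"
  shows "B x y = B y x"
proof -
  have B: "bilinear_map scale (*) B"
    and supersym: "\<And>p q x y. x \<in> V p \<Longrightarrow> y \<in> V q \<Longrightarrow> B x y = psign p q * B y x"
    using O unfolding odd_quadratic_structure_def nd_ss_inv_form_def by blast+
  note B_left = module_hom.add[OF bilinear_map_module_hom_left[OF B]]
    and B_right = module_hom.add[OF bilinear_map_module_hom_right[OF B]]
  have homogeneous: "B x y = B y x" if x: "x \<in> V p" for x y p
  proof -
    obtain b c where bc: "b \<in> V p" "c \<in> V (\<not> p)" "y = b + c"
      by (rule homogeneous_decomposition)
    have "B x y = B x c"
      using bc odd_quadratic_structure_same_parity[OF O x bc(1)] by (simp add: B_right)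
    also have "\<dots> = B c x"
      using supersym[OF x bc(2)] by (simp add: psign_def)
    also have "\<dots> = B y x"
      using bc odd_quadratic_structure_same_parity[OF O bc(1) x] by (simp add: B_left)
    finally show ?thesis .
  qed
  obtain a b where ab: "a \<in> V False" "b \<in> V (\<not> False)" "x = a + b"
    by (rule homogeneous_decomposition)
  have "B x y = B a y + B b y"
    using ab(3) by (simp add: B_left)
  also have "\<dots> = B y a + B y b"
    using homogeneous[OF ab(1), of y] homogeneous[OF ab(2), of y] by simp
  also have "\<dots> = B y x"
    using ab(3) by (simp add: B_right)
  finally show ?thesis .
qed

end

locale even_and_odd_quadratic = z2_graded_vector_space scale V
  for scale :: "'k::field \<Rightarrow> 'v::ab_group_add \<Rightarrow> 'v" (infixr \<open>*s\<close> 75) and V +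
  fixes br :: "'v \<Rightarrow> 'v \<Rightarrow> 'v" and B B' :: "'v \<Rightarrow> 'v \<Rightarrow> 'k"
  assumes finite_dimensional: "fin_dim_vs scale"
    and bracket_linear_left: "module_hom scale scale (\<lambda>x. br x y)"
    and quadratic: "quadratic_structure scale V br B"
    and odd_quadratic: "odd_quadratic_structure scale V br B'"
begin

lemma B_bilinear: "bilinear_map scale (*) B"
  and B_nondegenerate: "(\<forall>y. B x y = 0) \<Longrightarrow> x = 0"
  and B_invariant: "B (br x y) z = B x (br y z)"
  using quadratic unfolding quadratic_structure_def nd_ss_inv_form_def by blast+

lemma B'_bilinear: "bilinear_map scale (*) B'"
  and B'_nondegenerate: "(\<forall>y. B' x y = 0) \<Longrightarrow> x = 0"
  and B'_invariant: "B' (br x y) z = B' x (br y z)"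
  using odd_quadratic unfolding odd_quadratic_structure_def nd_ss_inv_form_def by blast+

lemma B_cancel:
  assumes "\<And>z. B u z = B v z"
  shows "u = v"
proof -
  have "B (u - v) z = 0" for z
    using assms by (simp add: module_hom.diff[OF bilinear_map_module_hom_left[OF B_bilinear]])
  then show ?thesis
    using B_nondegenerate by (metis eq_iff_diff_eq_0)
qed

definition D :: "'v \<Rightarrow> 'v" where
  "D x = (SOME u. \<forall>z. B u z = B' x z)"

lemma B_D: "B (D x) z = B' x z"
proof -
  obtain Bs where "finite_dimensional_vector_space scale Bs"
    using finite_dimensional by (rule fin_dim_vs_obtain_basis)
  then obtain u where "\<forall>z. B u z = B' x z"
    using finite_dimensional_vector_space.nondegenerate_form_represents_functional
      [OF _ B_bilinear B_nondegenerate bilinear_map_module_hom_right[OF B'_bilinear]]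
    by metis
  then show ?thesis
    unfolding D_def by (rule someI[where P = "\<lambda>u. \<forall>z. B u z = B' x z", THEN spec])
qed

lemma D_scale: "D (c *s x) = c *s D x"
  by (rule B_cancel) (simp add: B_D module_hom.scale[OF bilinear_map_module_hom_left[OF B_bilinear]]
      module_hom.scale[OF bilinear_map_module_hom_left[OF B'_bilinear]])

lemma D_bracket_left: "D (br x y) = br (D x) y"
  by (rule B_cancel) (simp add: B_D B_invariant B'_invariant)

lemma D_bracket_right:
  assumes "x \<in> V p"
  shows "D (br x y) = psign p p *s br x (D y)"
proof (rule B_cancel)
  fix z
  have "B (D (br x y)) z = B' x (br y z)"
    by (simp add: B_D B'_invariant)
  also have "\<dots> = B' y (br z x)"
    using odd_quadratic_structure_symmetric[OF odd_quadratic] by (metis B'_invariant)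
  also have "\<dots> = B (br (D y) z) x"
    by (simp add: B_D B_invariant)
  also have "\<dots> = psign p p * B x (br (D y) z)"
    by (rule quadratic_structure_commute[OF quadratic assms])
  also have "\<dots> = B (psign p p *s br x (D y)) z"
    by (simp add: module_hom.scale[OF bilinear_map_module_hom_left[OF B_bilinear]] B_invariant)
  finally show "B (D (br x y)) z = B (psign p p *s br x (D y)) z" .
qed

lemma D_parity:
  assumes x: "x \<in> V p"
  shows "D x \<in> V (\<not> p)"
proof -
  note B_left = module_hom.add[OF bilinear_map_module_hom_left[OF B_bilinear]]
    and B_right = module_hom.add[OF bilinear_map_module_hom_right[OF B_bilinear]]
  obtain a b where ab: "a \<in> V p" "b \<in> V (\<not> p)" "D x = a + b"
    by (rule homogeneous_decomposition)
  have "B a z = 0" for z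
  proof -
    obtain c d where cd: "c \<in> V p" "d \<in> V (\<not> p)" "z = c + d"
      by (rule homogeneous_decomposition)
    have "B a c = B (D x) c - B b c"
      using ab(3) by (simp add: B_left)
    also have "\<dots> = 0"
      using B_D odd_quadratic_structure_same_parity[OF odd_quadratic x cd(1)]
        quadratic_structure_orthogonal[OF quadratic ab(2) cd(1)] by simp
    finally have "B a c = 0" .
    moreover have "B a d = 0"
      using quadratic_structure_orthogonal[OF quadratic ab(1) cd(2)] by simp
    ultimately show "B a z = 0"
      using cd(3) by (simp add: B_right)
  qed
  then have "a = 0"
    using B_nondegenerate by blast
  then show ?thesis
    using ab by simp
qed

lemma D_eq_0D: "D x = 0 \<Longrightarrow> x = 0"
  using B_D B'_nondegenerate module_hom.zero[OF bilinear_map_module_hom_left[OF B_bilinear]]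
  by metis

text \<open>Since \<open>D\<close> reverses parity, moving it through \<open>[Dx, y]\<close> and through \<open>[x, Dy]\<close>
picks up opposite signs.\<close>

lemma bracket_D_D_eq_0:
  assumes "(2::'k) \<noteq> 0" and x: "x \<in> V p"
  shows "br (D x) (D y) = 0"
proof -
  have "psign (\<not> p) (\<not> p) *s br (D x) (D y) = D (D (br x y))"
    using D_bracket_left D_bracket_right[OF D_parity[OF x]] by simp
  also have "\<dots> = psign p p *s br (D x) (D y)"
    using D_bracket_right[OF x] D_scale D_bracket_left by simp
  finally have "(psign (\<not> p) (\<not> p) - psign p p) *s br (D x) (D y) = 0"
    by (simp add: scale_left_diff_distrib)
  moreover have "psign (\<not> p) (\<not> p) - psign p p \<noteq> (0::'k)"
    using assms(1) by (cases p) (simp_all add: psign_def)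
  ultimately show ?thesis
    by simp
qed

lemma bracket_eq_0:
  assumes "(2::'k) \<noteq> 0"
  shows "br x y = 0"
proof -
  have homogeneous: "br x y = 0" if x: "x \<in> V p" for x y p
  proof -
    have "D (D (br x y)) = psign p p *s br (D x) (D y)"
      by (simp only: D_bracket_right[OF x, of y] D_scale D_bracket_left[of x "D y"])
    then have "D (D (br x y)) = 0"
      by (simp add: bracket_D_D_eq_0[OF assms x])
    then show ?thesis
      by (rule D_eq_0D[OF D_eq_0D])
  qed
  obtain a b where "a \<in> V False" "b \<in> V (\<not> False)" "x = a + b"
    by (rule homogeneous_decomposition)
  then show ?thesis
    using homogeneous by (simp add: module_hom.add[OF bracket_linear_left])
qed

end

theorem mainTheorem5:
  fixes s :: "'k::field_char_0 \<Rightarrow> 'v::ab_group_add \<Rightarrow> 'v"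
    and V :: "bool \<Rightarrow> 'v set"
    and br :: "'v \<Rightarrow> 'v \<Rightarrow> 'v"
  assumes "alg_closed_field TYPE('k)"
    and "lie_superalgebra s V br"
    and "\<not> abelian_bracket br"
  shows "\<not> ((\<exists>B. quadratic_structure s V br B) \<and> (\<exists>B'. odd_quadratic_structure s V br B'))"
proof
  assume "(\<exists>B. quadratic_structure s V br B) \<and> (\<exists>B'. odd_quadratic_structure s V br B')"
  then obtain B B' where "quadratic_structure s V br B" "odd_quadratic_structure s V br B'"
    by blast
  moreover have "fin_dim_vs s" "z2_graded s V" "bilinear_map s s br"
    using assms(2) unfolding lie_superalgebra_def by blast+
  moreover have "vector_space s"
    using \<open>fin_dim_vs s\<close> unfolding fin_dim_vs_def by blast
  ultimately interpret even_and_odd_quadratic s V br B B'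
    by (intro even_and_odd_quadratic.intro z2_graded_vector_space.intro
        even_and_odd_quadratic_axioms.intro z2_graded_vector_space_axioms.intro
        bilinear_map_module_hom_left)
  have "br x y = 0" for x y
    by (rule bracket_eq_0) simp
  with assms(3) show False
    unfolding abelian_bracket_def by blast
qed

end
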